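(* Let $G$ be a Polish group and let $H$ be an uncountable closed subgroup of $G$ contained in the center of $G$. Suppose $H$ is the union of a set which is Haar null in $H$ and a set which is Haar meager in $H$. Then $G$ is the union of a set which is Haar null in $G$ and a set which is Haar meager in $G$. In particular, this holds for $G=\mathbb{R}^\omega$ and for $G=X$ where $X$ is any Banach space.
   Context: Let $G$ be a Polish group. A set $A\subseteq G$ is Haar null if there exist a Borel set $B\supseteq A$ and a Borel probability measure $\mu$ on $G$ such that $\mu(gBh)=0$ for all $g,h\in G$. A set $A\subseteq G$ is Haar meager if there exist a Borel set $B\supseteq A$, a compact metric space $K$, and a continuous map $f\colon K\to G$ such that $f^{-1}(gBh)$ is meager in $K$ for every $g,h\in G$. (For abelian groups, these reduce to the conditions $\mu(x+B)=0$, resp. $f^{-1}(x+B)$ meager, for all $x\in G$.) *)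

theory Defs
  imports "HOL-Analysis.Analysis" "HOL-Probability.Probability" "HOL-Algebra.Group" "HOL-Library.Function_Algebras"
begin

definition borel_sets :: "'a topology \<Rightarrow> 'a set set" where
  "borel_sets T = sigma_sets (topspace T) {U. openin T U}"

definition nowhere_dense_in :: "'a topology \<Rightarrow> 'a set \<Rightarrow> bool" where
  "nowhere_dense_in X S \<longleftrightarrow> S \<subseteq> topspace X \<and> X interior_of (X closure_of S) = {}"

definition meager_in :: "'a topology \<Rightarrow> 'a set \<Rightarrow> bool" where
  "meager_in X S \<longleftrightarrow> (\<exists>F. countable F \<and> (\<forall>N\<in>F. nowhere_dense_in X N) \<and> S \<subseteq> \<Union>F)"

definition polish_group :: "('a, 'b) monoid_scheme \<Rightarrow> 'a topology \<Rightarrow> bool" where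
  "polish_group G T \<longleftrightarrow> group G \<and> topspace T = carrier G
     \<and> completely_metrizable_space T \<and> separable_space T
     \<and> continuous_map (prod_topology T T) T (\<lambda>(x, y). x \<otimes>\<^bsub>G\<^esub> y)
     \<and> continuous_map T T (\<lambda>x. inv\<^bsub>G\<^esub> x)"

definition translate2 :: "('a, 'b) monoid_scheme \<Rightarrow> 'a \<Rightarrow> 'a set \<Rightarrow> 'a \<Rightarrow> 'a set" where
  "translate2 G g B h = (\<lambda>x. g \<otimes>\<^bsub>G\<^esub> x \<otimes>\<^bsub>G\<^esub> h) ` B"

definition haar_null :: "('a, 'b) monoid_scheme \<Rightarrow> 'a topology \<Rightarrow> 'a set \<Rightarrow> bool" where
  "haar_null G T A \<longleftrightarrow> (\<exists>B (\<mu>::'a measure). B \<in> borel_sets T \<and> A \<subseteq> B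
     \<and> sets \<mu> = borel_sets T \<and> prob_space \<mu>
     \<and> (\<forall>g\<in>carrier G. \<forall>h\<in>carrier G. emeasure \<mu> (translate2 G g B h) = 0))"

(* Compact metric spaces K are represented on a carrier K :: real set with an
   arbitrary metric d; every compact metric space has cardinality at most the
   continuum, hence is isometric to such a space. *)
definition haar_meager :: "('a, 'b) monoid_scheme \<Rightarrow> 'a topology \<Rightarrow> 'a set \<Rightarrow> bool" where
  "haar_meager G T A \<longleftrightarrow> (\<exists>B (K::real set) d f. B \<in> borel_sets T \<and> A \<subseteq> B
     \<and> Metric_space K d \<and> K \<noteq> {} \<and> compact_space (Metric_space.mtopology K d)
     \<and> continuous_map (Metric_space.mtopology K d) T f
     \<and> (\<forall>g\<in>carrier G. \<forall>h\<in>carrier G.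
          meager_in (Metric_space.mtopology K d) {x \<in> K. f x \<in> translate2 G g B h}))"

definition group_center :: "('a, 'b) monoid_scheme \<Rightarrow> 'a set" where
  "group_center G = {z \<in> carrier G. \<forall>x\<in>carrier G. z \<otimes>\<^bsub>G\<^esub> x = x \<otimes>\<^bsub>G\<^esub> z}"

definition add_group :: "('a::group_add) monoid" where
  "add_group = \<lparr>carrier = UNIV, mult = (+), one = 0\<rparr>"

end

theory Submission
  imports Defs
begin

(* Let N and M cover H.  Since H is a closed subgroup of the Polish group G, there is a Borel map
   r : G -> H with r(y t) = r(y) t for all t in H: a greedy search along a countable dense
   sequence picks, for each coset yH, a Cauchy sequence approaching it, whose limit s(y) lies in
   yH and depends only on the coset, and r(y) = s(y)^-1 y.  Because H is central, every two-sided
   translate of r^-1(B) meets H in a left translate of B.  So the witness measure for N, pushed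
   into G, shows that r^-1(N) is Haar null in G, and the witness map for M, composed with the
   inclusion of H, shows that r^-1(M) is Haar meager in G.

   For R^omega and for Banach spaces the decomposition is explicit: a line {t e} carries a Borel
   coordinate p with p(x + t e) = p(x) + t, and the space splits into p^-1(A) and p^-1(R - A),
   where A is a Lebesgue null dense G-delta subset of R. *)

definition null_meager_decomposable :: "('a, 'b) monoid_scheme \<Rightarrow> 'a topology \<Rightarrow> bool" where
  "null_meager_decomposable G T \<longleftrightarrow>
     (\<exists>N M. carrier G = N \<union> M \<and> haar_null G T N \<and> haar_meager G T M)"


lemma nowhere_dense_in_complement:
  assumes "openin X U" "X closure_of U = topspace X"
  shows "nowhere_dense_in X (topspace X - U)"
proof -
  have "closedin X (topspace X - U)"
    using assms(1) by blast
  then show ?thesis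
    unfolding nowhere_dense_in_def
    by (simp add: closure_of_closedin interior_of_complement assms(2))
qed

lemma meager_in_subset: "meager_in X S \<Longrightarrow> T \<subseteq> S \<Longrightarrow> meager_in X T"
  unfolding meager_in_def by (meson order_trans)

definition borel_of :: "'a topology \<Rightarrow> 'a measure" where
  "borel_of X = sigma (topspace X) {U. openin X U}"

lemma sets_borel_of [simp]: "sets (borel_of X) = borel_sets X"
  unfolding borel_of_def borel_sets_def by (rule sets_measure_of) (auto dest: openin_subset)

lemma space_borel_of [simp]: "space (borel_of X) = topspace X"
  unfolding borel_of_def by (rule space_measure_of) (auto dest: openin_subset)

lemma borel_sets_openin: "openin X U \<Longrightarrow> U \<in> borel_sets X"
  unfolding borel_sets_def by (rule sigma_sets.Basic) simp

lemma borel_sets_closedin: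
  assumes "closedin X C"
  shows "C \<in> borel_sets X"
proof -
  have "topspace X - (topspace X - C) \<in> borel_sets X"
    unfolding borel_sets_def using assms by (intro sigma_sets.Compl sigma_sets.Basic) auto
  then show ?thesis
    using closedin_subset[OF assms] by (simp add: double_diff)
qed

lemma borel_sets_subset_topspace: "B \<in> borel_sets X \<Longrightarrow> B \<subseteq> topspace X"
  by (metis sets.sets_into_space sets_borel_of space_borel_of)

lemma space_eq_topspace_if_sets_eq_borel_sets:
  assumes "sets M = borel_sets X"
  shows "space M = topspace X"
proof
  show "space M \<subseteq> topspace X"
    using sets.top[of M] assms borel_sets_subset_topspace by blast
  show "topspace X \<subseteq> space M"
    using sets.sets_into_space[of "topspace X" M] assms borel_sets_openin[OF openin_topspace] by blast
qed

lemma measurable_continuous_map: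
  assumes "continuous_map X Y f"
  shows "f \<in> borel_of X \<rightarrow>\<^sub>M borel_of Y"
  unfolding borel_of_def[of Y]
proof (rule measurable_measure_of)
  show "f \<in> space (borel_of X) \<rightarrow> topspace Y"
    using assms by (auto simp: continuous_map_def)
  show "f -` U \<inter> space (borel_of X) \<in> sets (borel_of X)" if "U \<in> {U. openin Y U}" for U
    using that assms borel_sets_openin openin_continuous_map_preimage
    by (fastforce simp: vimage_def Int_def conj_commute)
qed (auto dest: openin_subset)

lemma borel_sets_subtopology:
  assumes "S \<in> borel_sets X"
  shows "B \<in> borel_sets (subtopology X S) \<longleftrightarrow> B \<subseteq> S \<and> B \<in> borel_sets X"
proof -
  have S: "S \<subseteq> topspace X"
    using assms by (rule borel_sets_subset_topspace)
  have "topspace (subtopology X S) = S" and "{U. openin (subtopology X S) U} = (\<inter>) S ` {U. openin X U}"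
    using S by (auto simp: openin_subtopology)
  then have "borel_sets (subtopology X S) = sigma_sets S ((\<inter>) S ` {U. openin X U})"
    by (simp add: borel_sets_def)
  also have "\<dots> = (\<inter>) S ` borel_sets X"
    using sigma_sets_Int[of S "topspace X" "{U. openin X U}"] assms S by (simp add: borel_sets_def)
  finally show ?thesis
    using assms by (auto simp: image_iff) (metis sets.Int sets_borel_of)
qed

lemma
  assumes "sets \<mu> = borel_sets (subtopology X S)" and S: "S \<in> borel_sets X"
  shows space_measure_subtopology: "space \<mu> = S"
    and measurable_inclusion_subtopology: "(\<lambda>x. x) \<in> \<mu> \<rightarrow>\<^sub>M borel_of X"
proof -
  show space: "space \<mu> = S"
    using space_eq_topspace_if_sets_eq_borel_sets[OF assms(1)] borel_sets_subset_topspace[OF S]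
    by auto
  show "(\<lambda>x. x) \<in> \<mu> \<rightarrow>\<^sub>M borel_of X"
  proof (rule measurableI)
    show "x \<in> space (borel_of X)" if "x \<in> space \<mu>" for x
      using that space borel_sets_subset_topspace[OF S] by auto
    show "(\<lambda>x. x) -` A \<inter> space \<mu> \<in> sets \<mu>" if "A \<in> sets (borel_of X)" for A
      using that assms space by (simp add: borel_sets_subtopology Int_commute sets.Int[where M="borel_of X", simplified])
  qed
qed

lemma mtopology_dist: "Metric_space.mtopology S dist = top_of_set S"
proof -
  interpret Submetric UNIV dist S
    by unfold_locales auto
  show ?thesis
    using mtopology_submetric by simp
qed

lemma borel_sets_euclidean: "borel_sets euclidean = sets borel"
  by (simp add: borel_sets_def sets_borel)

context Metric_space
begin

lemma separable_imp_dense_sequence: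
  assumes "separable_space mtopology" and "M \<noteq> {}"
  obtains s :: "nat \<Rightarrow> 'a" where "range s \<subseteq> M" and "\<And>x e. x \<in> M \<Longrightarrow> e > 0 \<Longrightarrow> \<exists>n. d (s n) x < e"
proof -
  obtain D where D: "countable D" "D \<subseteq> M" "mtopology closure_of D = M"
    using assms(1) unfolding separable_space_def by auto
  then have "D \<noteq> {}"
    using assms(2) by auto
  show ?thesis
  proof (rule that)
    show "range (from_nat_into D) \<subseteq> M"
      using D(2) from_nat_into[OF \<open>D \<noteq> {}\<close>] by blast
    fix x and e :: real
    assume "x \<in> M" "e > 0"
    then obtain y where "y \<in> D" "y \<in> mball x e"
      using D(3) unfolding metric_closure_of by blast
    then show "\<exists>n. d (from_nat_into D n) x < e"
      using range_from_nat_into[OF \<open>D \<noteq> {}\<close> D(1)] by (metis commute imageE in_mball)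
  qed
qed

lemma MCauchy_if_dist_Suc_less_geometric:
  assumes M: "\<And>k. x k \<in> M" and step: "\<And>k. d (x (Suc k)) (x k) < (1/2)^k"
  shows "MCauchy x"
proof -
  have bound: "d (x m) (x n) \<le> 2 * (1/2)^m - 2 * (1/2)^n" if "m \<le> n" for m n
    using that
  proof (induction n rule: dec_induct)
    case (step n)
    have "d (x m) (x (Suc n)) \<le> d (x m) (x n) + d (x n) (x (Suc n))"
      by (rule triangle[OF M M M])
    also have "\<dots> \<le> 2 * (1/2)^m - 2 * (1/2)^n + (1/2)^n"
      using step.IH assms(2)[of n] by (simp add: commute)
    finally show ?case
      by simp
  qed (simp add: M)
  show ?thesis
    unfolding MCauchy_def
  proof (intro conjI allI impI)
    fix e :: real
    assume "e > 0"
    then obtain N where N: "(1/2::real)^N < e/2"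
      using real_arch_pow_inv[of "e/2" "1/2::real"] by auto
    have "d (x m) (x n) < e" if "N \<le> m" "m \<le> n" for m n
    proof -
      have "d (x m) (x n) \<le> 2 * (1/2)^m"
        using bound[OF that(2)] zero_le_power[of "1/2::real" n] by linarith
      also have "\<dots> \<le> 2 * (1/2)^N"
        using that(1) by (simp add: power_decreasing)
      finally show ?thesis
        using N by simp
    qed
    then show "\<exists>N. \<forall>m n. N \<le> m \<longrightarrow> N \<le> n \<longrightarrow> d (x m) (x n) < e"
      by (metis commute M nle_le)
  qed (use M in auto)
qed

lemma limitin_if_dist_tendsto_zero:
  assumes "limitin mtopology x l F" and y: "\<And>k. y k \<in> M" and "((\<lambda>k. d (x k) (y k)) \<longlongrightarrow> 0) F"
  shows "limitin mtopology y l F"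
proof -
  have l: "l \<in> M" and x: "\<forall>\<^sub>F k in F. x k \<in> M" and xl: "((\<lambda>k. d (x k) l) \<longlongrightarrow> 0) F"
    using assms(1) by (auto simp: limitin_metric_dist_null)
  have sum: "((\<lambda>k. d (x k) (y k) + d (x k) l) \<longlongrightarrow> 0) F"
    using assms(3) xl by (rule tendsto_add_zero)
  have lower: "\<forall>\<^sub>F k in F. 0 \<le> d (y k) l"
    by simp
  have upper: "\<forall>\<^sub>F k in F. d (y k) l \<le> d (x k) (y k) + d (x k) l"
    using x
  proof eventually_elim
    case (elim k)
    show ?case
      using triangle[OF y[of k] elim l] commute[of "y k" "x k"] by linarith
  qed
  have "((\<lambda>k. d (y k) l) \<longlongrightarrow> 0) F"
    using tendsto_sandwich[OF lower upper tendsto_const sum] .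
  then show ?thesis
    using l y by (simp add: limitin_metric_dist_null)
qed

lemma borel_sets_mball_subset:
  assumes "openin mtopology V"
  shows "{z \<in> M. mball z r \<subseteq> V} \<in> borel_sets mtopology"
proof -
  have "{z \<in> M. mball z r \<subseteq> V} = M - (\<Union>w\<in>M - V. mball w r)"
    using assms openin_subset by (fastforce simp: commute)
  moreover have "closedin mtopology (M - (\<Union>w\<in>M - V. mball w r))"
    by (intro closedin_diff closedin_mspace openin_Union) auto
  ultimately show ?thesis
    by (simp add: borel_sets_closedin)
qed

lemma limitin_in_openin_iff:
  assumes lim: "limitin mtopology x l sequentially" and V: "openin mtopology V"
  shows "l \<in> V \<longleftrightarrow> (\<exists>m. \<forall>\<^sub>F k in sequentially. x k \<in> {z \<in> M. mball z (1 / Suc m) \<subseteq> V})"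
proof -
  have near: "\<forall>\<^sub>F k in sequentially. x k \<in> M \<and> d (x k) l < 1 / Suc m" for m
    using lim by (simp add: limitin_metric)
  have l: "l \<in> M"
    using lim by (rule limitin_mspace)
  show ?thesis
  proof
    assume "l \<in> V"
    then obtain r where r: "r > 0" "mball l r \<subseteq> V"
      using V by (auto simp: openin_mtopology)
    obtain m where m: "1 / real (Suc m) < r / 2"
      using r(1) reals_Archimedean[of "r/2"] by (auto simp: inverse_eq_divide)
    from near[of m] have "\<forall>\<^sub>F k in sequentially. x k \<in> {z \<in> M. mball z (1 / Suc m) \<subseteq> V}"
    proof eventually_elim
      case (elim k)
      have "mball (x k) (1 / Suc m) \<subseteq> mball l r"
        using elim m l by (intro mball_subset) (auto simp: commute)
      then show ?case
        using elim r(2) by auto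
    qed
    then show "\<exists>m. \<forall>\<^sub>F k in sequentially. x k \<in> {z \<in> M. mball z (1 / Suc m) \<subseteq> V}" ..
  next
    assume "\<exists>m. \<forall>\<^sub>F k in sequentially. x k \<in> {z \<in> M. mball z (1 / Suc m) \<subseteq> V}"
    then obtain m where "\<forall>\<^sub>F k in sequentially. x k \<in> {z \<in> M. mball z (1 / Suc m) \<subseteq> V}" ..
    with near[of m] have "\<forall>\<^sub>F k in sequentially. l \<in> V"
      by eventually_elim (auto simp: commute l)
    then show "l \<in> V"
      by simp
  qed
qed

lemma measurable_limitin:
  assumes f: "\<And>k. f k \<in> N \<rightarrow>\<^sub>M borel_of mtopology"
    and lim: "\<And>x. x \<in> space N \<Longrightarrow> limitin mtopology (\<lambda>k. f k x) (g x) sequentially"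
  shows "g \<in> N \<rightarrow>\<^sub>M borel_of mtopology"
  unfolding borel_of_def
proof (rule measurable_measure_of)
  show "g \<in> space N \<rightarrow> topspace mtopology"
    using lim limitin_mspace by auto
  fix V assume "V \<in> {U. openin mtopology U}"
  then have V: "openin mtopology V"
    by simp
  define C where "C m = {z \<in> M. mball z (1 / Suc m) \<subseteq> V}" for m
  have "g -` V \<inter> space N = (\<Union>m. {x \<in> space N. \<forall>\<^sub>F k in sequentially. f k x \<in> C m})"
    using limitin_in_openin_iff[OF lim V] by (auto simp: C_def)
  also have "\<dots> \<in> sets N"
  proof (intro sets.countable_UN'' sets_Collect_eventually_sequentially)
    show "{x \<in> space N. f k x \<in> C m} \<in> sets N" for m k
      using measurable_sets[OF f, of "C m" k] borel_sets_mball_subset[OF V]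
      by (simp add: C_def Int_def conj_commute vimage_def)
  qed simp
  finally show "g -` V \<inter> space N \<in> sets N" .
qed (auto simp: openin_mtopology)

end

section \<open>A Lebesgue null comeager set of reals\<close>

definition limsup_balls :: "(nat \<Rightarrow> real) \<Rightarrow> real set" where
  "limsup_balls a = (\<Inter>n. \<Union>k. ball (a k) ((1/2)^(n+k)))"

lemma limsup_balls_borel: "limsup_balls a \<in> sets borel"
  unfolding limsup_balls_def by (intro sets.countable_INT sets.countable_UN) auto

lemma emeasure_limsup_balls: "emeasure lborel (limsup_balls a) = 0"
proof -
  have bound: "emeasure lborel (limsup_balls a) \<le> ennreal (4 * (1/2)^n)" for n
  proof -
    have sums: "(\<lambda>k. 2 * (1/2::real)^(n+k)) sums (4 * (1/2)^n)"
      using sums_mult[OF geometric_sums[of "1/2::real"], of "2 * (1/2)^n"]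
      by (simp add: power_add mult_ac)
    have "emeasure lborel (limsup_balls a) \<le> emeasure lborel (\<Union>k. ball (a k) ((1/2::real)^(n+k)))"
      unfolding limsup_balls_def by (rule emeasure_mono) auto
    also have "\<dots> \<le> (\<Sum>k. emeasure lborel (ball (a k) ((1/2::real)^(n+k))))"
      by (rule emeasure_subadditive_countably) auto
    also have "\<dots> = (\<Sum>k. ennreal (2 * (1/2)^(n+k)))"
      by (simp add: ball_eq_greaterThanLessThan)
    also have "\<dots> = ennreal (4 * (1/2)^n)"
      using sums by (simp add: suminf_ennreal2 sums_iff)
    finally show ?thesis .
  qed
  have "(\<lambda>n. ennreal (4 * (1/2::real)^n)) \<longlonglongrightarrow> 0"
    by (intro tendsto_ennrealI[of _ 0, simplified] tendsto_mult_right_zero LIMSEQ_power_zero) simp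
  then show ?thesis
    using bound by (metis LIMSEQ_le_const le_zero_eq)
qed

lemma vimage_translation_limsup_balls:
  "(\<lambda>t. c + t) -` limsup_balls a = limsup_balls (\<lambda>k. a k - c)"
  unfolding limsup_balls_def by (auto simp: dist_real_def algebra_simps)

lemma meager_in_diff_limsup_balls:
  assumes dense: "closure (range a) = UNIV" and S: "S \<subseteq> closure (interior S)"
  shows "meager_in (top_of_set S) (S - limsup_balls a)"
proof -
  define U where "U n = (\<Union>k. ball (a k) ((1/2::real)^(n+k)))" for n
  have nowhere_dense: "nowhere_dense_in (top_of_set S) (S - U n)" for n
  proof -
    have "range a \<subseteq> U n"
      by (auto simp: U_def)
    then have "closure (U n) = UNIV"
      using dense closure_mono by blast
    then have "interior S \<subseteq> closure (interior S \<inter> U n)"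
      using open_Int_closure_subset[of "interior S" "U n"] by auto
    also have "\<dots> \<subseteq> closure (S \<inter> U n)"
      by (intro closure_mono) (auto dest: interior_subset[THEN subsetD])
    finally have "S \<subseteq> closure (S \<inter> U n)"
      using S by (meson closed_closure closure_minimal order_trans)
    then have "top_of_set S closure_of (S \<inter> U n) = topspace (top_of_set S)"
      by (auto simp: closure_of_subtopology)
    moreover have "openin (top_of_set S) (S \<inter> U n)"
      by (auto simp: U_def openin_open_Int)
    ultimately have "nowhere_dense_in (top_of_set S) (topspace (top_of_set S) - S \<inter> U n)"
      by (rule nowhere_dense_in_complement[rotated])
    then show ?thesis
      by (simp add: Diff_Int)
  qed
  have "S - limsup_balls a = (\<Union>n. S - U n)"
    by (auto simp: limsup_balls_def U_def)
  then show ?thesis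
    unfolding meager_in_def using nowhere_dense by (intro exI[of _ "range (\<lambda>n. S - U n)"]) auto
qed

lemma closure_range_translated_rats:
  "closure (range (\<lambda>k. from_nat_into \<rat> k - c)) = (UNIV :: real set)"
proof -
  have "range (\<lambda>k. from_nat_into \<rat> k - c) = (\<lambda>x. x - c) ` range (from_nat_into \<rat>)"
    by (simp add: image_image)
  also have "\<dots> = (\<lambda>x. x - c) ` \<rat>"
    using range_from_nat_into[OF _ countable_rat] Rats_0 by blast
  finally show ?thesis
    by (simp add: closure_translation_subtract Rats_closure_real surj_def)
qed

lemma emeasure_translate_rat_limsup_balls:
  "emeasure lborel ((\<lambda>t. c + t) -` limsup_balls (from_nat_into \<rat>)) = 0"
  by (simp add: vimage_translation_limsup_balls emeasure_limsup_balls)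

lemma meager_in_translate_rat_limsup_balls:
  "meager_in (top_of_set {0..1}) ({0..1} - (\<lambda>t. c + t) -` limsup_balls (from_nat_into \<rat>))"
  unfolding vimage_translation_limsup_balls
  by (intro meager_in_diff_limsup_balls closure_range_translated_rats) simp

section \<open>Additive groups with a Borel coordinate along a line\<close>

lemma carrier_add_group [simp]: "carrier add_group = UNIV"
  by (simp add: add_group_def)

lemma translate2_add_group: "translate2 add_group g B h = (\<lambda>x. g + x + h) ` B"
  by (simp add: translate2_def add_group_def)

locale line_coordinate =
  fixes \<phi> :: "real \<Rightarrow> 'x::{topological_space, ab_group_add}" and p :: "'x \<Rightarrow> real"
  assumes continuous: "continuous_on UNIV \<phi>"
    and borel_measurable: "p \<in> borel_measurable borel"
    and coordinate: "\<And>x t. p (x + \<phi> t) = p x + t"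
begin

lemma vimage_translate2_subset:
  "\<phi> -` translate2 add_group g (p -` S) h \<subseteq> (\<lambda>t. p (- g - h) + t) -` S"
proof
  fix t assume "t \<in> \<phi> -` translate2 add_group g (p -` S) h"
  then obtain x where x: "p x \<in> S" "\<phi> t = g + x + h"
    by (auto simp: translate2_add_group)
  then have "x = (- g - h) + \<phi> t"
    by (simp add: algebra_simps)
  then have "p x = p (- g - h) + t"
    using coordinate by simp
  then show "t \<in> (\<lambda>t. p (- g - h) + t) -` S"
    using x by simp
qed

lemma haar_null_vimage:
  assumes A: "A \<in> sets borel" and null: "\<And>c. emeasure lborel ((\<lambda>t. c + t) -` A) = 0"
  shows "haar_null add_group euclidean (p -` A)"
  unfolding haar_null_def
proof (intro exI conjI ballI)
  define \<nu> where "\<nu> = uniform_measure lborel {0..1::real}"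
  have \<phi>_measurable: "\<phi> \<in> \<nu> \<rightarrow>\<^sub>M borel"
    unfolding \<nu>_def using borel_measurable_continuous_onI[OF continuous]
    by (simp cong: measurable_cong_sets)
  show "p -` A \<in> borel_sets euclidean"
    using measurable_sets_borel[OF borel_measurable A] by (simp add: borel_sets_euclidean)
  show "p -` A \<subseteq> p -` A" ..
  show "sets (distr \<nu> borel \<phi>) = borel_sets euclidean"
    by (simp add: borel_sets_euclidean)
  show "prob_space (distr \<nu> borel \<phi>)"
    unfolding \<nu>_def
    by (intro prob_space.prob_space_distr prob_space_uniform_measure \<phi>_measurable[unfolded \<nu>_def]) auto
  have shift_A: "(\<lambda>t. c + t) -` A \<in> sets borel" for c
    by (rule measurable_sets_borel[OF _ A]) (intro borel_measurable_continuous_onI continuous_intros)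
  fix g h :: 'x
  let ?X = "translate2 add_group g (p -` A) h"
  let ?c = "p (- g - h)"
  show "emeasure (distr \<nu> borel \<phi>) ?X = 0"
  proof (cases "?X \<in> sets borel")
    case True
    have "emeasure (distr \<nu> borel \<phi>) ?X = emeasure \<nu> (\<phi> -` ?X)"
      using emeasure_distr[OF \<phi>_measurable True] by (simp add: \<nu>_def)
    also have "\<dots> \<le> emeasure \<nu> ((\<lambda>t. ?c + t) -` A)"
      using shift_A by (intro emeasure_mono[OF vimage_translate2_subset]) (simp add: \<nu>_def)
    also have "\<dots> \<le> emeasure lborel ((\<lambda>t. ?c + t) -` A)"
      using shift_A by (simp add: \<nu>_def emeasure_mono divide_ennreal_def)
    also have "\<dots> = 0"
      by (rule null)
    finally show ?thesis
      by simp
  qed (simp add: emeasure_notin_sets)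
qed

lemma haar_meager_vimage_Compl:
  assumes A: "A \<in> sets borel"
    and meager: "\<And>c. meager_in (top_of_set {0..1}) ({0..1} - (\<lambda>t. c + t) -` A)"
  shows "haar_meager add_group euclidean (p -` (- A))"
  unfolding haar_meager_def
proof (intro exI conjI ballI)
  show "p -` (- A) \<in> borel_sets euclidean"
    using measurable_sets_borel[OF borel_measurable sets.compl_sets[OF A]]
    by (simp add: borel_sets_euclidean Compl_eq_Diff_UNIV)
  show "p -` (- A) \<subseteq> p -` (- A)" ..
  show "{0..1::real} \<noteq> {}"
    by simp
  show "Metric_space {0..1::real} dist"
    by (rule Met_TC.subspace) auto
  show "compact_space (Metric_space.mtopology {0..1::real} dist)"
    unfolding mtopology_dist by (metis compact_Icc compactin_euclidean_iff compact_space_subtopology)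
  show "continuous_map (Metric_space.mtopology {0..1::real} dist) euclidean \<phi>"
    unfolding mtopology_dist continuous_map_iff_continuous using continuous continuous_on_subset by blast
  fix g h :: 'x
  have "{t \<in> {0..1}. \<phi> t \<in> translate2 add_group g (p -` (- A)) h} \<subseteq> {0..1} - (\<lambda>t. p (- g - h) + t) -` A"
    using vimage_translate2_subset[of g "- A" h] by blast
  then show "meager_in (Metric_space.mtopology {0..1} dist)
      {t \<in> {0..1}. \<phi> t \<in> translate2 add_group g (p -` (- A)) h}"
    unfolding mtopology_dist by (rule meager_in_subset[OF meager])
qed

lemma null_meager_decomposable_add_group: "null_meager_decomposable (add_group :: 'x monoid) euclidean"
proof -
  let ?A = "limsup_balls (from_nat_into \<rat>)"
  have "haar_null add_group euclidean (p -` ?A)"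
    by (intro haar_null_vimage emeasure_translate_rat_limsup_balls limsup_balls_borel)
  moreover have "haar_meager add_group euclidean (p -` (- ?A))"
    by (intro haar_meager_vimage_Compl meager_in_translate_rat_limsup_balls limsup_balls_borel)
  ultimately show ?thesis
    unfolding null_meager_decomposable_def by (intro exI[of _ "p -` ?A"] exI[of _ "p -` (- ?A)"]) auto
qed

end

lemma infdist_translate_line:
  fixes e :: "'x::real_normed_vector"
  shows "infdist (y + s *\<^sub>R e) (range (\<lambda>t::real. t *\<^sub>R e)) = infdist y (range (\<lambda>t. t *\<^sub>R e))"
proof -
  have infdist_line: "infdist z (range (\<lambda>t::real. t *\<^sub>R e)) = (INF t. norm (z - t *\<^sub>R e))" for z
    by (simp add: infdist_def image_image dist_norm)
  have shift: "(\<lambda>t. norm (y + s *\<^sub>R e - t *\<^sub>R e)) = (\<lambda>t. norm (y - t *\<^sub>R e)) \<circ> (\<lambda>t. t - s)"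
    by (rule ext) (simp add: scaleR_diff_left algebra_simps)
  have surj: "range (\<lambda>t::real. t - s) = UNIV"
    by (auto intro: image_eqI[where x="x + s" for x])
  have "range (\<lambda>t. norm (y + s *\<^sub>R e - t *\<^sub>R e)) = range (\<lambda>t. norm (y - t *\<^sub>R e))"
    unfolding shift image_comp[symmetric] surj ..
  then show ?thesis
    unfolding infdist_line by (rule arg_cong)
qed

text \<open>The coordinate of \<open>y\<close> is the infimum of the parameters \<open>t\<close> for which \<open>t e\<close> is
  nearly a nearest point of the line to \<open>y\<close>; this set of parameters moves rigidly when \<open>y\<close>
  moves along the line, and \<open>{y. p y < a}\<close> is open.\<close>

lemma borel_coordinate_along_line:
  fixes e :: "'x::real_normed_vector"
  assumes "e \<noteq> 0"
  obtains p :: "'x \<Rightarrow> real"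
  where "p \<in> borel_measurable borel" and "\<And>x t. p (x + t *\<^sub>R e) = p x + t"
proof
  define L where "L = range (\<lambda>t::real. t *\<^sub>R e)"
  define S where "S y = {t. norm (y - t *\<^sub>R e) < infdist y L + 1}" for y
  define p where "p y = Inf (S y)" for y
  have infdist_L: "infdist y L = (INF t. norm (y - t *\<^sub>R e))" for y
    by (simp add: infdist_def L_def image_image dist_norm)
  have S_nonempty: "S y \<noteq> {}" for y
  proof -
    have "(INF t. norm (y - t *\<^sub>R e)) < infdist y L + 1"
      by (simp add: infdist_L)
    then obtain t where "norm (y - t *\<^sub>R e) < infdist y L + 1"
      by (subst (asm) cINF_less_iff) (auto intro: bdd_belowI[of _ 0])
    then show ?thesis
      by (auto simp: S_def)
  qed
  have S_bdd: "bdd_below (S y)" for y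
  proof
    fix t assume "t \<in> S y"
    then have "\<bar>t\<bar> * norm e \<le> norm y + (infdist y L + 1)"
      using norm_triangle_sub[of "t *\<^sub>R e" y] by (simp add: S_def norm_minus_commute)
    then have "\<bar>t\<bar> \<le> (norm y + (infdist y L + 1)) / norm e"
      using assms by (simp add: pos_le_divide_eq)
    then show "- ((norm y + (infdist y L + 1)) / norm e) \<le> t"
      by linarith
  qed
  have infdist_shift: "infdist (y + s *\<^sub>R e) L = infdist y L" for y s
    unfolding L_def by (rule infdist_translate_line)
  have S_shift: "S (y + s *\<^sub>R e) = (+) s ` S y" for y s
  proof -
    have "norm (y + s *\<^sub>R e - t *\<^sub>R e) = norm (y - (t - s) *\<^sub>R e)" for t
      by (simp add: algebra_simps)
    then show ?thesis
      by (force simp: S_def infdist_shift image_iff)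
  qed
  show "p (x + t *\<^sub>R e) = p x + t" for x t
    using Inf_add_eq[of id "S x" t] S_nonempty S_bdd by (simp add: p_def S_shift add.commute)
  have "{y. p y < a} = (\<Union>t\<in>{..<a}. {y. norm (y - t *\<^sub>R e) < infdist y L + 1})" for a
    using S_nonempty S_bdd by (auto simp: p_def S_def cInf_less_iff intro: cInf_lower le_less_trans)
  moreover have "open {y. norm (y - t *\<^sub>R e) < infdist y L + 1}" for t
    by (intro open_Collect_less continuous_intros)
  ultimately show "p \<in> borel_measurable borel"
    by (simp add: borel_measurable_iff_less borel_open open_UN)
qed

lemma null_meager_decomposable_sequence_space:
  "null_meager_decomposable (add_group :: (nat \<Rightarrow> real) monoid) euclidean"
proof (intro line_coordinate.null_meager_decomposable_add_group line_coordinate.intro)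
  show "continuous_on UNIV (\<lambda>t n. if n = 0 then t else 0 :: real)"
  proof (rule continuous_on_coordinatewise_then_product)
    show "continuous_on UNIV (\<lambda>t. if n = 0 then t else 0 :: real)" for n
      by (cases "n = 0") simp_all
  qed
  show "(\<lambda>x. x 0) \<in> borel_measurable (borel :: (nat \<Rightarrow> real) measure)"
    by (intro borel_measurable_continuous_onI continuous_on_product_coordinates)
qed simp

lemma null_meager_decomposable_banach:
  assumes "(UNIV :: 'x::banach set) \<noteq> {0}"
  shows "null_meager_decomposable (add_group :: 'x monoid) euclidean"
proof -
  obtain e :: 'x where "e \<noteq> 0"
    using assms by auto
  then obtain p :: "'x \<Rightarrow> real" where "p \<in> borel_measurable borel" "\<And>x t. p (x + t *\<^sub>R e) = p x + t"
    using borel_coordinate_along_line by blast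
  then show ?thesis
    by (intro line_coordinate.null_meager_decomposable_add_group[of "\<lambda>t. t *\<^sub>R e" p]
        line_coordinate.intro) (auto intro: continuous_intros)
qed

section \<open>A Borel retraction onto a closed subgroup of a Polish group\<close>

locale polish_metric_group = group G + Metric_space "carrier G" d
  for G :: "('a, 'b) monoid_scheme" (structure) and d :: "'a \<Rightarrow> 'a \<Rightarrow> real" +
  assumes complete: "mcomplete"
    and separable: "separable_space mtopology"
    and continuous_mult: "continuous_map (prod_topology mtopology mtopology) mtopology (\<lambda>(x, y). x \<otimes> y)"
    and continuous_inv: "continuous_map mtopology mtopology (\<lambda>x. inv x)"
begin

lemma continuous_map_mult:
  assumes "continuous_map X mtopology f" and "continuous_map X mtopology g"
  shows "continuous_map X mtopology (\<lambda>x. f x \<otimes> g x)"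
  using continuous_map_compose[OF continuous_map_pairedI[OF assms] continuous_mult]
  by (simp add: o_def)

lemma continuous_map_mult_left: "a \<in> carrier G \<Longrightarrow> continuous_map mtopology mtopology (\<lambda>x. a \<otimes> x)"
  by (intro continuous_map_mult continuous_map_id[unfolded id_def]) simp

lemma continuous_map_mult_right: "a \<in> carrier G \<Longrightarrow> continuous_map mtopology mtopology (\<lambda>x. x \<otimes> a)"
  by (intro continuous_map_mult continuous_map_id[unfolded id_def]) simp

lemma continuous_map_inv_mult_right: "a \<in> carrier G \<Longrightarrow> continuous_map mtopology mtopology (\<lambda>x. inv x \<otimes> a)"
  by (intro continuous_map_mult continuous_inv) simp

definition dense_seq :: "nat \<Rightarrow> 'a" where
  "dense_seq = (SOME s. range s \<subseteq> carrier G \<and> (\<forall>x\<in>carrier G. \<forall>e>0. \<exists>n. d (s n) x < e))"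

lemma dense_seq: "dense_seq n \<in> carrier G" "x \<in> carrier G \<Longrightarrow> e > 0 \<Longrightarrow> \<exists>n. d (dense_seq n) x < e"
proof -
  have "carrier G \<noteq> {}"
    using one_closed by blast
  then obtain s :: "nat \<Rightarrow> 'a" where
    s: "range s \<subseteq> carrier G" "\<And>x e. x \<in> carrier G \<Longrightarrow> e > 0 \<Longrightarrow> \<exists>n. d (s n) x < e"
    by (rule separable_imp_dense_sequence[OF separable]) blast
  let ?dense = "\<lambda>s. range s \<subseteq> carrier G \<and> (\<forall>x\<in>carrier G. \<forall>e>0. \<exists>n. d (s n) x < e)"
  have "?dense s"
    using s by simp
  then have "?dense dense_seq"
    unfolding dense_seq_def using someI[of ?dense s] by blast
  then show "dense_seq n \<in> carrier G" "x \<in> carrier G \<Longrightarrow> e > 0 \<Longrightarrow> \<exists>n. d (dense_seq n) x < e"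
    by auto
qed

end

locale polish_group_closed_subgroup = polish_metric_group +
  fixes H :: "'a set"
  assumes subgroup: "subgroup H G" and closed: "closedin mtopology H"
begin

lemma subgroup_carrier [intro]: "t \<in> H \<Longrightarrow> t \<in> carrier G"
  using subgroup.mem_carrier[OF subgroup] .

definition coset_meets :: "'a \<Rightarrow> 'a \<Rightarrow> real \<Rightarrow> bool" where
  "coset_meets y q r \<longleftrightarrow> (\<exists>h\<in>H. y \<otimes> h \<in> mball q r)"

lemma coset_meets_mult:
  assumes "y \<in> carrier G" and "t \<in> H"
  shows "coset_meets (y \<otimes> t) q r \<longleftrightarrow> coset_meets y q r"
proof
  assume "coset_meets (y \<otimes> t) q r"
  then obtain h where h: "h \<in> H" "y \<otimes> t \<otimes> h \<in> mball q r"
    by (auto simp: coset_meets_def)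
  moreover have "y \<otimes> t \<otimes> h = y \<otimes> (t \<otimes> h)"
    using assms(1) subgroup_carrier[OF assms(2)] subgroup_carrier[OF h(1)] by (simp add: m_assoc)
  ultimately show "coset_meets y q r"
    using subgroup.m_closed[OF subgroup assms(2) h(1)] by (auto simp: coset_meets_def)
next
  assume "coset_meets y q r"
  then obtain h where h: "h \<in> H" "y \<otimes> h \<in> mball q r"
    by (auto simp: coset_meets_def)
  have "y \<otimes> h = y \<otimes> t \<otimes> (inv t \<otimes> h)"
    using assms(1) subgroup_carrier[OF assms(2)] subgroup_carrier[OF h(1)]
    by (simp add: m_assoc[symmetric] r_inv) (simp add: m_assoc)
  then show "coset_meets (y \<otimes> t) q r"
    using h subgroup.m_closed[OF subgroup subgroup.m_inv_closed[OF subgroup assms(2)]]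
    by (auto simp: coset_meets_def)
qed

lemma openin_coset_meets: "openin mtopology {y \<in> carrier G. coset_meets y q r}"
proof -
  have "{y \<in> carrier G. coset_meets y q r} = (\<Union>h\<in>H. {y \<in> topspace mtopology. y \<otimes> h \<in> mball q r})"
    by (auto simp: coset_meets_def)
  moreover have "openin mtopology {y \<in> topspace mtopology. y \<otimes> h \<in> mball q r}" if "h \<in> H" for h
    using openin_continuous_map_preimage[OF continuous_map_mult_right[OF subgroup_carrier[OF that]] openin_mball] .
  ultimately show ?thesis
    by (metis (mono_tags, lifting) imageE openin_Union)
qed

lemma coset_meets_dense_seq:
  assumes y: "y \<in> carrier G" and "r > 0"
  shows "\<exists>n. coset_meets y (dense_seq n) r"
proof -
  obtain n where "d (dense_seq n) y < r"
    using dense_seq(2)[OF y \<open>r > 0\<close>] by blast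
  then have "y \<otimes> \<one> \<in> mball (dense_seq n) r"
    using y dense_seq(1) by simp
  then show ?thesis
    using subgroup.one_closed[OF subgroup] by (auto simp: coset_meets_def)
qed

lemma coset_meets_refine:
  assumes y: "y \<in> carrier G" and "coset_meets y q r"
  shows "\<exists>n. coset_meets y (dense_seq n) (r/2) \<and> d (dense_seq n) q < r"
proof -
  obtain h where h: "h \<in> H" "y \<otimes> h \<in> mball q r"
    using assms(2) by (auto simp: coset_meets_def)
  then have q: "q \<in> carrier G" and yh: "y \<otimes> h \<in> carrier G" and "d q (y \<otimes> h) < r"
    by auto
  define e where "e = min (r - d q (y \<otimes> h)) (r/2)"
  have "r > 0"
    using \<open>d q (y \<otimes> h) < r\<close> nonneg[of q "y \<otimes> h"] by linarith
  then have "e > 0"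
    using \<open>d q (y \<otimes> h) < r\<close> by (simp add: e_def)
  then obtain n where n: "d (dense_seq n) (y \<otimes> h) < e"
    using dense_seq(2)[OF yh] by blast
  have "coset_meets y (dense_seq n) (r/2)"
    unfolding coset_meets_def using h n yh dense_seq(1) by (auto simp: e_def)
  moreover have "d (dense_seq n) q < r"
    using triangle[OF dense_seq(1)[of n] yh q] n commute[of q "y \<otimes> h"] by (simp add: e_def)
  ultimately show ?thesis
    by blast
qed

text \<open>Choosing least indices, rather than arbitrary ones, makes the approximations depend only
  on the coset \<open>y H\<close> and makes them Borel in \<open>y\<close>.\<close>

primrec coset_index :: "nat \<Rightarrow> 'a \<Rightarrow> nat" where
  "coset_index 0 y = (LEAST n. coset_meets y (dense_seq n) 1)"
| "coset_index (Suc k) y = (LEAST n. coset_meets y (dense_seq n) ((1/2)^Suc k)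
     \<and> d (dense_seq n) (dense_seq (coset_index k y)) < (1/2)^k)"

definition coset_approx :: "nat \<Rightarrow> 'a \<Rightarrow> 'a" where
  "coset_approx k y = dense_seq (coset_index k y)"

lemma coset_approx_carrier: "coset_approx k y \<in> carrier G"
  by (simp add: coset_approx_def dense_seq)

lemma coset_meets_coset_approx:
  assumes y: "y \<in> carrier G"
  shows "coset_meets y (coset_approx k y) ((1/2)^k)"
    and "d (coset_approx (Suc k) y) (coset_approx k y) < (1/2)^k"
proof -
  have next_index: "\<exists>n. coset_meets y (dense_seq n) ((1/2)^Suc k)
      \<and> d (dense_seq n) (dense_seq (coset_index k y)) < (1/2)^k"
    if "coset_meets y (coset_approx k y) ((1/2)^k)" for k
    using coset_meets_refine[OF y that] by (simp add: coset_approx_def)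
  show meets: "coset_meets y (coset_approx k y) ((1/2)^k)" for k
  proof (induction k)
    case 0
    show ?case
      using LeastI_ex[OF coset_meets_dense_seq[OF y, of 1]] by (simp add: coset_approx_def)
  next
    case (Suc k)
    show ?case
      using LeastI_ex[OF next_index[OF Suc]] by (simp add: coset_approx_def)
  qed
  show "d (coset_approx (Suc k) y) (coset_approx k y) < (1/2)^k"
    using LeastI_ex[OF next_index[OF meets]] by (simp add: coset_approx_def)
qed

lemma coset_index_mult: "y \<in> carrier G \<Longrightarrow> t \<in> H \<Longrightarrow> coset_index k (y \<otimes> t) = coset_index k y"
  by (induction k) (simp_all add: coset_meets_mult)

definition coset_rep :: "'a \<Rightarrow> 'a" where
  "coset_rep y = (SOME l. limitin mtopology (\<lambda>k. coset_approx k y) l sequentially)"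

lemma limitin_coset_rep:
  assumes "y \<in> carrier G"
  shows "limitin mtopology (\<lambda>k. coset_approx k y) (coset_rep y) sequentially"
proof -
  have "MCauchy (\<lambda>k. coset_approx k y)"
    using coset_approx_carrier coset_meets_coset_approx(2)[OF assms]
    by (rule MCauchy_if_dist_Suc_less_geometric)
  then have "\<exists>l. limitin mtopology (\<lambda>k. coset_approx k y) l sequentially"
    using complete by (simp add: mcomplete_def)
  then show ?thesis
    unfolding coset_rep_def by (rule someI_ex)
qed

lemma coset_rep_carrier: "y \<in> carrier G \<Longrightarrow> coset_rep y \<in> carrier G"
  using limitin_coset_rep limitin_mspace by blast

lemma coset_rep_mult: "y \<in> carrier G \<Longrightarrow> t \<in> H \<Longrightarrow> coset_rep (y \<otimes> t) = coset_rep y"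
  by (simp add: coset_rep_def coset_approx_def coset_index_mult)

text \<open>Points \<open>y h\<^sub>k\<close> of the coset within \<open>2\<^sup>-\<^sup>k\<close> of the approximations converge to
  the limit, so \<open>h\<^sub>k\<close> converges to \<open>y\<^sup>-\<^sup>1\<close> times it, which stays in the closed set \<open>H\<close>.\<close>

lemma coset_rep_in_coset:
  assumes y: "y \<in> carrier G"
  shows "inv y \<otimes> coset_rep y \<in> H"
proof -
  have "\<forall>k. \<exists>h. h \<in> H \<and> y \<otimes> h \<in> mball (coset_approx k y) ((1/2)^k)"
    using coset_meets_coset_approx(1)[OF y] unfolding coset_meets_def by blast
  from choice[OF this] obtain h where h: "\<And>k. h k \<in> H" "\<And>k. y \<otimes> h k \<in> mball (coset_approx k y) ((1/2)^k)"
    by blast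
  have yh: "y \<otimes> h k \<in> carrier G" for k
    using y subgroup_carrier[OF h(1)] by simp
  have "((\<lambda>k. d (coset_approx k y) (y \<otimes> h k)) \<longlongrightarrow> 0) sequentially"
  proof (rule Lim_null_comparison[OF always_eventually LIMSEQ_power_zero])
    show "\<forall>k. norm (d (coset_approx k y) (y \<otimes> h k)) \<le> (1/2::real)^k"
    proof
      fix k
      have "d (coset_approx k y) (y \<otimes> h k) < (1/2)^k"
        using h(2)[of k] by simp
      then show "norm (d (coset_approx k y) (y \<otimes> h k)) \<le> (1/2)^k"
        using nonneg[of "coset_approx k y" "y \<otimes> h k"] by simp
    qed
  qed simp
  then have "limitin mtopology (\<lambda>k. y \<otimes> h k) (coset_rep y) sequentially"
    by (rule limitin_if_dist_tendsto_zero[OF limitin_coset_rep[OF y] yh])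
  then have "limitin mtopology ((\<lambda>x. inv y \<otimes> x) \<circ> (\<lambda>k. y \<otimes> h k)) (inv y \<otimes> coset_rep y) sequentially"
    by (rule continuous_map_limit[OF continuous_map_mult_left[OF inv_closed[OF y]]])
  moreover have "(\<lambda>x. inv y \<otimes> x) \<circ> (\<lambda>k. y \<otimes> h k) = h"
    using y h(1) by (simp add: fun_eq_iff m_assoc[symmetric] subgroup_carrier)
  ultimately show ?thesis
    using limitin_closedin[OF _ closed always_eventually trivial_limit_sequentially] h(1) by simp
qed

definition coset_retraction :: "'a \<Rightarrow> 'a" where
  "coset_retraction y = inv (coset_rep y) \<otimes> y"

lemma coset_retraction_in_subgroup: "y \<in> carrier G \<Longrightarrow> coset_retraction y \<in> H"
  using subgroup.m_inv_closed[OF subgroup coset_rep_in_coset]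
  by (simp add: coset_retraction_def inv_mult_group coset_rep_carrier)

lemma coset_retraction_mult:
  "y \<in> carrier G \<Longrightarrow> t \<in> H \<Longrightarrow> coset_retraction (y \<otimes> t) = coset_retraction y \<otimes> t"
  by (simp add: coset_retraction_def coset_rep_mult coset_rep_carrier subgroup_carrier m_assoc)

lemma measurable_coset_index: "coset_index k \<in> borel_of mtopology \<rightarrow>\<^sub>M count_space UNIV"
proof -
  have meets: "Measurable.pred (borel_of mtopology) (\<lambda>y. coset_meets y (dense_seq n) r)" for n r
    using borel_sets_openin[OF openin_coset_meets] by (simp add: pred_def topspace_mtopology)
  show ?thesis
  proof (induction k)
    case 0
    show ?case
      using meets by (simp add: measurable_Least)
  next
    case (Suc k)
    have "Measurable.pred (borel_of mtopology)
        (\<lambda>y. d (dense_seq n) (dense_seq (coset_index k y)) < (1/2)^k)" for n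
      using measurable_compose[OF Suc.IH measurable_count_space,
          where g="\<lambda>i. d (dense_seq n) (dense_seq i) < (1/2)^k"] by simp
    then show ?case
      using meets by (simp add: measurable_Least pred_intros_logic)
  qed
qed

lemma measurable_coset_retraction: "coset_retraction \<in> borel_of mtopology \<rightarrow>\<^sub>M borel_of mtopology"
proof (rule measurable_limitin)
  show "(\<lambda>y. inv (coset_approx k y) \<otimes> y) \<in> borel_of mtopology \<rightarrow>\<^sub>M borel_of mtopology" for k
    unfolding coset_approx_def
    by (rule measurable_compose_countable'[OF _ measurable_coset_index])
       (auto intro: measurable_continuous_map continuous_map_mult_left dense_seq)
  show "limitin mtopology (\<lambda>k. inv (coset_approx k y) \<otimes> y) (coset_retraction y) sequentially"
    if "y \<in> space (borel_of mtopology)" for y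
    using continuous_map_limit[OF continuous_map_inv_mult_right limitin_coset_rep] that
    by (simp add: coset_retraction_def o_def)
qed

end

section \<open>Transfer along a central retraction\<close>

locale central_retraction = group G for G :: "('a, 'b) monoid_scheme" (structure) +
  fixes H :: "'a set" and r :: "'a \<Rightarrow> 'a"
  assumes subgroup: "subgroup H G" and central: "H \<subseteq> group_center G"
    and retraction_in: "\<And>y. y \<in> carrier G \<Longrightarrow> r y \<in> H"
    and retraction_mult: "\<And>y t. y \<in> carrier G \<Longrightarrow> t \<in> H \<Longrightarrow> r (y \<otimes> t) = r y \<otimes> t"
begin

lemma subgroup_carrier [intro]: "t \<in> H \<Longrightarrow> t \<in> carrier G"
  using subgroup.mem_carrier[OF subgroup] .

lemma retraction_untranslate:
  assumes x: "x \<in> H" and g: "g \<in> carrier G" and h: "h \<in> carrier G"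
  shows "r (inv g \<otimes> x \<otimes> inv h) = r (inv g \<otimes> inv h) \<otimes> x"
proof -
  have "x \<otimes> inv h = inv h \<otimes> x"
    using x central h by (auto simp: group_center_def)
  then have "inv g \<otimes> x \<otimes> inv h = inv g \<otimes> inv h \<otimes> x"
    using x g h by (simp add: m_assoc subgroup_carrier)
  then show ?thesis
    using retraction_mult[of "inv g \<otimes> inv h" x] x g h by simp
qed

lemma translate2_vimage_Int:
  assumes B: "B \<subseteq> H" and g: "g \<in> carrier G" and h: "h \<in> carrier G"
  shows "translate2 G g {y \<in> carrier G. r y \<in> B} h \<inter> H = translate2 G (inv (r (inv g \<otimes> inv h))) B \<one>"
proof -
  define c where "c = inv g \<otimes> inv h"
  have rc: "r c \<in> carrier G"
    using retraction_in[of c] g h by (auto simp: c_def)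
  show ?thesis
  proof (intro equalityI subsetI)
    fix x assume "x \<in> translate2 G g {y \<in> carrier G. r y \<in> B} h \<inter> H"
    then obtain y where y: "y \<in> carrier G" "r y \<in> B" "x = g \<otimes> y \<otimes> h" and x: "x \<in> H"
      unfolding translate2_def by blast
    have "inv g \<otimes> x \<otimes> inv h = y"
      using g h y by (simp add: m_assoc[symmetric]) (simp add: m_assoc)
    then have "x = inv (r c) \<otimes> r y \<otimes> \<one>"
      using retraction_untranslate[OF x g h] rc x by (simp add: c_def m_assoc[symmetric] subgroup_carrier)
    then show "x \<in> translate2 G (inv (r (inv g \<otimes> inv h))) B \<one>"
      unfolding translate2_def c_def using y(2) by blast
  next
    fix x assume "x \<in> translate2 G (inv (r (inv g \<otimes> inv h))) B \<one>"
    then obtain b where b: "b \<in> B" "x = inv (r c) \<otimes> b \<otimes> \<one>"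
      unfolding translate2_def c_def by blast
    have "b \<in> H"
      using b(1) B by blast
    then have x: "x \<in> H"
      using b(2) subgroup.m_closed[OF subgroup subgroup.m_inv_closed[OF subgroup retraction_in]] g h
      by (simp add: c_def subgroup_carrier)
    have "r (inv g \<otimes> x \<otimes> inv h) = b"
      using retraction_untranslate[OF x g h] b(2) rc \<open>b \<in> H\<close>
      by (simp add: c_def m_assoc[symmetric] subgroup_carrier)
    moreover have "x = g \<otimes> (inv g \<otimes> x \<otimes> inv h) \<otimes> h"
      using g h x by (simp add: m_assoc subgroup_carrier) (simp add: m_assoc[symmetric] subgroup_carrier)
    ultimately show "x \<in> translate2 G g {y \<in> carrier G. r y \<in> B} h \<inter> H"
      unfolding translate2_def using g h x b(1) by (auto simp: subgroup_carrier)
  qed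
qed

lemma translate2_subgroup: "translate2 (G\<lparr>carrier := H\<rparr>) g B h = translate2 G g B h"
  by (simp add: translate2_def)

lemma left_translate_in_subgroup: "g \<in> carrier G \<Longrightarrow> h \<in> carrier G \<Longrightarrow> inv (r (inv g \<otimes> inv h)) \<in> H"
  by (simp add: retraction_in subgroup.m_inv_closed[OF subgroup])

context
  fixes T :: "'a topology"
  assumes topspace: "topspace T = carrier G"
    and H_borel: "H \<in> borel_sets T"
    and measurable: "r \<in> borel_of T \<rightarrow>\<^sub>M borel_of T"
begin

lemma borel_sets_vimage:
  assumes "B \<in> borel_sets (subtopology T H)"
  shows "B \<subseteq> H" and "{y \<in> carrier G. r y \<in> B} \<in> borel_sets T"
proof -
  have "B \<subseteq> H" and "B \<in> borel_sets T"
    using assms H_borel by (auto simp: borel_sets_subtopology)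
  moreover have "{y \<in> carrier G. r y \<in> B} = r -` B \<inter> space (borel_of T)"
    by (auto simp: topspace)
  ultimately show "B \<subseteq> H" and "{y \<in> carrier G. r y \<in> B} \<in> borel_sets T"
    using measurable_sets[OF measurable] by auto
qed

lemma haar_null_vimage:
  assumes "haar_null (G\<lparr>carrier := H\<rparr>) (subtopology T H) N"
  shows "haar_null G T {y \<in> carrier G. r y \<in> N}"
proof -
  obtain B \<mu> where B: "B \<in> borel_sets (subtopology T H)" "N \<subseteq> B"
    and \<mu>: "sets \<mu> = borel_sets (subtopology T H)" "prob_space \<mu>"
    and null: "\<And>g h. g \<in> H \<Longrightarrow> h \<in> H \<Longrightarrow> emeasure \<mu> (translate2 G g B h) = 0"
    using assms unfolding haar_null_def translate2_subgroup by auto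
  note space = space_measure_subtopology[OF \<mu>(1) H_borel]
    and inclusion = measurable_inclusion_subtopology[OF \<mu>(1) H_borel]
  show ?thesis
    unfolding haar_null_def
  proof (intro exI conjI ballI)
    show "{y \<in> carrier G. r y \<in> B} \<in> borel_sets T"
      by (rule borel_sets_vimage(2)[OF B(1)])
    show "{y \<in> carrier G. r y \<in> N} \<subseteq> {y \<in> carrier G. r y \<in> B}"
      using B(2) by blast
    show "sets (distr \<mu> (borel_of T) (\<lambda>x. x)) = borel_sets T"
      by simp
    show "prob_space (distr \<mu> (borel_of T) (\<lambda>x. x))"
      by (rule prob_space.prob_space_distr[OF \<mu>(2) inclusion])
    fix g h assume g: "g \<in> carrier G" and h: "h \<in> carrier G"
    let ?X = "translate2 G g {y \<in> carrier G. r y \<in> B} h"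
    show "emeasure (distr \<mu> (borel_of T) (\<lambda>x. x)) ?X = 0"
    proof (cases "?X \<in> borel_sets T")
      case True
      then have "emeasure (distr \<mu> (borel_of T) (\<lambda>x. x)) ?X = emeasure \<mu> (?X \<inter> H)"
        using emeasure_distr[OF inclusion] space by simp
      also have "\<dots> = 0"
        using null[OF left_translate_in_subgroup[OF g h] subgroup.one_closed[OF subgroup]]
        by (simp add: translate2_vimage_Int[OF borel_sets_vimage(1)[OF B(1)] g h])
      finally show ?thesis .
    qed (simp add: emeasure_notin_sets)
  qed
qed

lemma haar_meager_vimage:
  assumes "haar_meager (G\<lparr>carrier := H\<rparr>) (subtopology T H) M"
  shows "haar_meager G T {y \<in> carrier G. r y \<in> M}"
proof -
  have "\<exists>B (K::real set) dK f. B \<in> borel_sets (subtopology T H) \<and> M \<subseteq> B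
     \<and> Metric_space K dK \<and> K \<noteq> {} \<and> compact_space (Metric_space.mtopology K dK)
     \<and> continuous_map (Metric_space.mtopology K dK) (subtopology T H) f
     \<and> (\<forall>g\<in>H. \<forall>h\<in>H. meager_in (Metric_space.mtopology K dK) {x \<in> K. f x \<in> translate2 G g B h})"
    using assms by (simp add: haar_meager_def translate2_subgroup)
  then obtain B and K :: "real set" and dK f where B: "B \<in> borel_sets (subtopology T H)" "M \<subseteq> B"
    and K: "Metric_space K dK" "K \<noteq> {}" "compact_space (Metric_space.mtopology K dK)"
    and f: "continuous_map (Metric_space.mtopology K dK) (subtopology T H) f"
    and meager: "\<And>g h. g \<in> H \<Longrightarrow> h \<in> H \<Longrightarrow>
       meager_in (Metric_space.mtopology K dK) {x \<in> K. f x \<in> translate2 G g B h}"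
    by blast
  have f_H: "f x \<in> H" if "x \<in> K" for x
    using continuous_map_image_subset_topspace[OF f] that Metric_space.topspace_mtopology[OF K(1)]
    by auto
  show ?thesis
    unfolding haar_meager_def
  proof (intro exI conjI ballI)
    show "{y \<in> carrier G. r y \<in> B} \<in> borel_sets T"
      by (rule borel_sets_vimage(2)[OF B(1)])
    show "{y \<in> carrier G. r y \<in> M} \<subseteq> {y \<in> carrier G. r y \<in> B}"
      using B(2) by blast
    show "continuous_map (Metric_space.mtopology K dK) T f"
      using f by (rule continuous_map_into_fulltopology)
    fix g h assume g: "g \<in> carrier G" and h: "h \<in> carrier G"
    have "{x \<in> K. f x \<in> translate2 G g {y \<in> carrier G. r y \<in> B} h}
        = {x \<in> K. f x \<in> translate2 G g {y \<in> carrier G. r y \<in> B} h \<inter> H}"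
      using f_H by blast
    also have "\<dots> = {x \<in> K. f x \<in> translate2 G (inv (r (inv g \<otimes> inv h))) B \<one>}"
      by (simp only: translate2_vimage_Int[OF borel_sets_vimage(1)[OF B(1)] g h])
    finally show "meager_in (Metric_space.mtopology K dK) {x \<in> K. f x \<in> translate2 G g {y \<in> carrier G. r y \<in> B} h}"
      using meager[OF left_translate_in_subgroup[OF g h] subgroup.one_closed[OF subgroup]] by simp
  qed (use K in auto)
qed

lemma null_meager_decomposable_vimage:
  assumes "null_meager_decomposable (G\<lparr>carrier := H\<rparr>) (subtopology T H)"
  shows "null_meager_decomposable G T"
proof -
  obtain N M where H: "H = N \<union> M" and N: "haar_null (G\<lparr>carrier := H\<rparr>) (subtopology T H) N"
    and M: "haar_meager (G\<lparr>carrier := H\<rparr>) (subtopology T H) M"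
    using assms unfolding null_meager_decomposable_def by auto
  have "carrier G = {y \<in> carrier G. r y \<in> N} \<union> {y \<in> carrier G. r y \<in> M}"
    using retraction_in H by auto
  with haar_null_vimage[OF N] haar_meager_vimage[OF M] show ?thesis
    unfolding null_meager_decomposable_def by blast
qed

end

end

lemma (in polish_group_closed_subgroup) null_meager_decomposable_if_central:
  assumes "H \<subseteq> group_center G"
    and "null_meager_decomposable (G\<lparr>carrier := H\<rparr>) (subtopology mtopology H)"
  shows "null_meager_decomposable G mtopology"
proof -
  have "central_retraction G H coset_retraction"
    by (intro central_retraction.intro central_retraction_axioms.intro is_group subgroup assms(1)
        coset_retraction_in_subgroup coset_retraction_mult)
  then interpret central_retraction G H coset_retraction .
  show ?thesis
    using assms(2) closed measurable_coset_retraction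
    by (intro null_meager_decomposable_vimage) (auto simp: borel_sets_closedin)
qed

lemma null_meager_decomposable_polish_group:
  assumes "polish_group G T" and "subgroup H G" and "closedin T H" and "H \<subseteq> group_center G"
    and "null_meager_decomposable (G\<lparr>carrier := H\<rparr>) (subtopology T H)"
  shows "null_meager_decomposable G T"
proof -
  obtain M d where "Metric_space M d" "Metric_space.mcomplete M d" and T: "T = Metric_space.mtopology M d"
    using assms(1) unfolding polish_group_def completely_metrizable_space_def by blast
  moreover have M: "M = carrier G"
    using assms(1) calculation by (simp add: polish_group_def Metric_space.topspace_mtopology)
  ultimately have "polish_group_closed_subgroup G d H"
    using assms(1-3) unfolding polish_group_def
    by (intro polish_group_closed_subgroup.intro polish_metric_group.intro polish_metric_group_axioms.intro
        polish_group_closed_subgroup_axioms.intro) auto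
  then interpret polish_group_closed_subgroup G d H .
  show ?thesis
    using null_meager_decomposable_if_central assms(4,5) T M by simp
qed

theorem theorem5p1:
  shows
   "(\<forall>(G::('a, 'b) monoid_scheme) (T::'a topology) H.
       polish_group G T \<and> subgroup H G \<and> closedin T H \<and> uncountable H
       \<and> H \<subseteq> group_center G
       \<and> (\<exists>N M. H = N \<union> M \<and> haar_null (G\<lparr>carrier := H\<rparr>) (subtopology T H) N
                 \<and> haar_meager (G\<lparr>carrier := H\<rparr>) (subtopology T H) M)
       \<longrightarrow> (\<exists>N M. carrier G = N \<union> M \<and> haar_null G T N \<and> haar_meager G T M))
    \<and> (\<exists>N M. carrier (add_group :: (nat \<Rightarrow> real) monoid) = N \<union> M
          \<and> haar_null (add_group :: (nat \<Rightarrow> real) monoid) euclidean N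
          \<and> haar_meager (add_group :: (nat \<Rightarrow> real) monoid) euclidean M)
    \<and> ((UNIV :: 'x::banach set) \<noteq> {0} \<longrightarrow>
        (\<exists>N M. carrier (add_group :: 'x monoid) = N \<union> M
          \<and> haar_null (add_group :: 'x monoid) euclidean N
          \<and> haar_meager (add_group :: 'x monoid) euclidean M))"
proof (intro conjI allI impI)
  fix G :: "('a, 'b) monoid_scheme" and T :: "'a topology" and H
  assume "polish_group G T \<and> subgroup H G \<and> closedin T H \<and> uncountable H
       \<and> H \<subseteq> group_center G
       \<and> (\<exists>N M. H = N \<union> M \<and> haar_null (G\<lparr>carrier := H\<rparr>) (subtopology T H) N
                 \<and> haar_meager (G\<lparr>carrier := H\<rparr>) (subtopology T H) M)"
  then show "\<exists>N M. carrier G = N \<union> M \<and> haar_null G T N \<and> haar_meager G T M"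
    using null_meager_decomposable_polish_group[of G T H]
    unfolding null_meager_decomposable_def by simp
next
  show "\<exists>N M. carrier (add_group :: (nat \<Rightarrow> real) monoid) = N \<union> M
      \<and> haar_null (add_group :: (nat \<Rightarrow> real) monoid) euclidean N
      \<and> haar_meager (add_group :: (nat \<Rightarrow> real) monoid) euclidean M"
    using null_meager_decomposable_sequence_space unfolding null_meager_decomposable_def .
next
  assume "(UNIV :: 'x::banach set) \<noteq> {0}"
  then show "\<exists>N M. carrier (add_group :: 'x monoid) = N \<union> M
      \<and> haar_null (add_group :: 'x monoid) euclidean N
      \<and> haar_meager (add_group :: 'x monoid) euclidean M"
    using null_meager_decomposable_banach unfolding null_meager_decomposable_def by blast
qed

end
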